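(* Let $H_1,H_2\in(0,1)$ and let $B^1_{H_1},B^2_{H_2}$ be independent fractional Brownian motions. The process $B^1_{H_1}(|B^2_{H_2}(t)|^{1/H_1})$, $t>0$, has density $$q(x,t)=\frac{1}{\pi t^{H_2}}K_0\!\left(\frac{|x|}{t^{H_2}}\right),\qquad x\neq0,$$ and $q$ satisfies $$\frac{\partial q}{\partial t}=-H_2\,t^{2H_2-1}\left(2\frac{\partial^2q}{\partial x^2}+x\frac{\partial^3 q}{\partial x^3}\right),\qquad x\neq0,\ t>0.$$
   Context: A fractional Brownian motion $B_H$ with Hurst index $H\in(0,1)$ is a centered Gaussian process with covariance $\frac12(|t|^{2H}+|s|^{2H}-|t-s|^{2H})$; in particular $B_H(t)\sim N(0,t^{2H})$. For independent processes $X$ and $Y\ge0$, $X(Y(t))$ has density $\int_0^\infty f_X(x,s)f_Y(s,t)ds$. $K_0$ is the modified Bessel function of the second kind of order 0. *)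

theory Defs
  imports "HOL-Probability.Probability"
begin

text \<open>Modified Bessel function of the second kind of order 0, via its standard
integral representation K_0(z) = int_0^infty exp(-z cosh u) du  (z > 0).\<close>
definition besselK0 :: "real \<Rightarrow> real" where
  "besselK0 z = (LBINT u:{0<..}. exp (- z * cosh u))"

definition qdens :: "real \<Rightarrow> real \<Rightarrow> real \<Rightarrow> real" where
  "qdens H2 x t = 1 / (pi * t powr H2) * besselK0 (\<bar>x\<bar> / t powr H2)"

end

theory Submission
  imports Defs "HOL-Real_Asymp.Real_Asymp"
begin

text \<open>Given \<open>Z\<close>, the subordinated value is centred Gaussian with standard deviation \<open>\<bar>Z\<bar>\<close>, so its
  density at \<open>x\<close> is \<open>\<integral> \<phi>(\<sigma>, z) \<phi>(\<bar>z\<bar>, x) dz\<close>, where \<open>\<phi>(\<sigma>, -)\<close> is the centred normal density with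
  standard deviation \<open>\<sigma> = t powr H2\<close>. The substitution \<open>z = sqrt (\<bar>x\<bar> \<sigma>) exp (w / 2)\<close> turns this into
  \<open>(1 / (2 \<pi> \<sigma>)) \<integral>\<^sub>\<real> exp (- (\<bar>x\<bar> / \<sigma>) cosh w) dw = K\<^sub>0 (\<bar>x\<bar> / \<sigma>) / (\<pi> \<sigma>)\<close>.
  Differentiating the integral representation of \<open>K\<^sub>0\<close> under the integral sign gives
  \<open>(-1)\<^sup>n K\<^sub>0\<^sup>(\<^sup>n\<^sup>) (c) = \<integral>\<^sub>0\<^sup>\<infinity> cosh\<^sup>n u exp (- c cosh u) du\<close>, and an integration by parts yields
  \<open>c K\<^sub>0''' + 2 K\<^sub>0'' - c K\<^sub>0' - K\<^sub>0 = 0\<close>. By the chain rule in \<open>t\<close> and in \<open>x\<close>, the PDE is this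
  identity at \<open>c = \<bar>x\<bar> / t powr H2\<close>.\<close>

lemma exp_ge_power_div_fact:
  fixes y :: real assumes "0 \<le> y" shows "y ^ n / fact n \<le> exp y"
proof -
  obtain t where "exp y = (\<Sum>m<Suc n. y ^ m / fact m) + exp t / fact (Suc n) * y ^ Suc n"
    using Maclaurin_exp_le[of y "Suc n"] by blast
  moreover have "y ^ n / fact n \<le> (\<Sum>m<Suc n. y ^ m / fact m)"
    by (rule member_le_sum) (use assms in auto)
  moreover have "0 \<le> exp t / fact (Suc n) * y ^ Suc n" using assms by simp
  ultimately show ?thesis by linarith
qed

lemma power_mult_exp_neg_le:
  fixes y a :: real assumes "0 \<le> y" "0 < a"
  shows "y ^ n * exp (- a * y) \<le> fact n / a ^ n"
proof -
  have "(a * y) ^ n / fact n \<le> exp (a * y)" using assms by (intro exp_ge_power_div_fact) simp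
  hence "y ^ n \<le> fact n / a ^ n * exp (a * y)"
    using assms by (simp add: field_simps power_mult_distrib)
  hence "y ^ n * exp (- a * y) \<le> fact n / a ^ n * exp (a * y) * exp (- a * y)"
    by (intro mult_right_mono) auto
  thus ?thesis by (simp add: exp_minus field_simps)
qed

lemma abs_exp_minus_one_minus_le: "\<bar>exp z - 1 - z\<bar> \<le> z\<^sup>2 / 2 * exp \<bar>z\<bar>" for z :: real
proof -
  obtain t where t: "\<bar>t\<bar> \<le> \<bar>z\<bar>" "exp z = (\<Sum>m<2. z ^ m / fact m) + exp t / fact 2 * z\<^sup>2"
    using Maclaurin_exp_le[of z 2] by blast
  hence "\<bar>exp z - 1 - z\<bar> = exp t / 2 * z\<^sup>2" by (simp add: numeral_2_eq_2)
  also have "\<dots> \<le> exp \<bar>z\<bar> / 2 * z\<^sup>2" using t(1) by (intro mult_right_mono) auto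
  finally show ?thesis by (simp add: mult.commute)
qed

lemma one_plus_le_two_cosh: "1 + u \<le> 2 * cosh (u :: real)"
proof -
  have "2 * cosh u = exp u + exp (- u)" by (simp add: cosh_def)
  thus ?thesis using exp_ge_add_one_self[of u] exp_gt_zero[of "- u"] by linarith
qed

section \<open>Derivatives of the integral representation of \<open>K\<^sub>0\<close>\<close>

definition besselK0_integrand :: "nat \<Rightarrow> real \<Rightarrow> real \<Rightarrow> real" where
  "besselK0_integrand n c u = cosh u ^ n * exp (- c * cosh u)"

definition besselK0_moment :: "nat \<Rightarrow> real \<Rightarrow> real" where
  "besselK0_moment n c = (LBINT u:{0<..}. besselK0_integrand n c u)"

lemma besselK0_moment_0: "besselK0_moment 0 = besselK0"
  by (simp add: fun_eq_iff besselK0_moment_def besselK0_integrand_def besselK0_def)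

lemma besselK0_integrand_nonneg: "0 \<le> besselK0_integrand n c u"
  by (simp add: besselK0_integrand_def)

lemma besselK0_moment_nonneg: "0 \<le> besselK0_moment n c"
  unfolding besselK0_moment_def set_lebesgue_integral_def
  by (intro integral_nonneg_AE AE_I2) (simp add: besselK0_integrand_nonneg)

lemma besselK0_integrand_even: "besselK0_integrand n c (- u) = besselK0_integrand n c u"
  by (simp add: besselK0_integrand_def)

lemma continuous_on_besselK0_integrand: "continuous_on A (besselK0_integrand n c)"
  unfolding besselK0_integrand_def by (intro continuous_intros)

lemma borel_measurable_besselK0_integrand [measurable]:
  "besselK0_integrand n c \<in> borel_measurable borel"
  by (rule borel_measurable_continuous_onI[OF continuous_on_besselK0_integrand])

lemma besselK0_integrand_set_integrable:
  assumes c: "0 < c" shows "set_integrable lborel {0<..} (besselK0_integrand n c)"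
proof (rule set_integrable_bound[OF set_integrable_mult_right[OF integrable_I0i_exp_mscale]])
  show "0 < c / 4" using c by simp
  show "set_borel_measurable lborel {0<..} (besselK0_integrand n c)"
    unfolding set_borel_measurable_def by measurable
  show "AE u in lborel. u \<in> {0<..} \<longrightarrow>
          norm (besselK0_integrand n c u) \<le> norm (fact n / (c/2) ^ n * exp (- (u * (c/4))))"
  proof (intro AE_I2 impI)
    fix u :: real assume u: "u \<in> {0<..}"
    have "besselK0_integrand n c u = cosh u ^ n * exp (- (c/2) * cosh u) * exp (- (c/2) * cosh u)"
      unfolding besselK0_integrand_def by (simp add: mult.assoc flip: exp_add)
    also have "\<dots> \<le> fact n / (c/2) ^ n * exp (- (c/2) * cosh u)"
      by (intro mult_right_mono power_mult_exp_neg_le) (use c in auto)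
    also have "\<dots> \<le> fact n / (c/2) ^ n * exp (- (u * (c/4)))"
      using one_plus_le_two_cosh[of u] c u by (intro mult_left_mono) (auto simp: field_simps)
    finally show "norm (besselK0_integrand n c u) \<le> norm (fact n / (c/2) ^ n * exp (- (u * (c/4))))"
      using besselK0_integrand_nonneg[of n c u] c by simp
  qed
qed

lemma besselK0_integrand_taylor_bound:
  assumes c: "0 < c" and h: "\<bar>h\<bar> \<le> c / 2"
  shows "\<bar>besselK0_integrand n (c + h) u - besselK0_integrand n c u + h * besselK0_integrand (Suc n) c u\<bar>
         \<le> h\<^sup>2 / 2 * besselK0_integrand (Suc (Suc n)) (c / 2) u"
proof -
  define a where "a = cosh u"
  have a: "0 \<le> a" unfolding a_def by simp
  have "besselK0_integrand n (c + h) u - besselK0_integrand n c u + h * besselK0_integrand (Suc n) c u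
        = a ^ n * exp (- c * a) * (exp (- h * a) - 1 - (- h * a))"
    unfolding besselK0_integrand_def a_def[symmetric] by (simp add: algebra_simps flip: exp_add)
  also have "\<bar>\<dots>\<bar> = a ^ n * exp (- c * a) * \<bar>exp (- h * a) - 1 - (- h * a)\<bar>"
    using a by (simp add: abs_mult)
  also have "\<dots> \<le> a ^ n * exp (- c * a) * ((- h * a)\<^sup>2 / 2 * exp \<bar>- h * a\<bar>)"
    by (intro mult_left_mono abs_exp_minus_one_minus_le) (use a in simp)
  also have "\<dots> = h\<^sup>2 / 2 * a ^ Suc (Suc n) * exp (- (c - \<bar>h\<bar>) * a)"
    using a by (simp add: abs_mult algebra_simps power2_eq_square flip: exp_add)
  also have "\<dots> \<le> h\<^sup>2 / 2 * a ^ Suc (Suc n) * exp (- (c / 2) * a)"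
  proof (intro mult_left_mono)
    have "(c / 2) * a \<le> (c - \<bar>h\<bar>) * a" using h a by (intro mult_right_mono) auto
    thus "exp (- (c - \<bar>h\<bar>) * a) \<le> exp (- (c / 2) * a)" by (simp only: exp_le_cancel_iff mult_minus_left neg_le_iff_le)
  qed (use a in auto)
  also have "\<dots> = h\<^sup>2 / 2 * besselK0_integrand (Suc (Suc n)) (c / 2) u"
    unfolding besselK0_integrand_def a_def by simp
  finally show ?thesis .
qed

lemma besselK0_moment_taylor_bound:
  assumes c: "0 < c" and h: "\<bar>h\<bar> \<le> c / 2"
  shows "\<bar>besselK0_moment n (c + h) - besselK0_moment n c + h * besselK0_moment (Suc n) c\<bar>
         \<le> h\<^sup>2 / 2 * besselK0_moment (Suc (Suc n)) (c / 2)"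
proof -
  note I = besselK0_integrand_set_integrable
  have ch: "0 < c + h" "0 < c / 2" using c h by auto
  define f where "f u = besselK0_integrand n (c + h) u - besselK0_integrand n c u
                        + h * besselK0_integrand (Suc n) c u" for u
  have If: "set_integrable lborel {0<..} f"
    unfolding f_def using c ch by (intro set_integral_add set_integral_diff set_integrable_mult_right I)
  have "besselK0_moment n (c + h) - besselK0_moment n c + h * besselK0_moment (Suc n) c
        = (LBINT u:{0<..}. f u)"
    unfolding f_def besselK0_moment_def using c ch
    by (simp add: set_integral_add set_integral_diff set_integrable_mult_right I)
  also have "\<bar>\<dots>\<bar> \<le> (LBINT u:{0<..}. \<bar>f u\<bar>)"
    using set_integral_norm_bound[OF If] by simp
  also have "\<dots> \<le> (LBINT u:{0<..}. h\<^sup>2 / 2 * besselK0_integrand (Suc (Suc n)) (c / 2) u)"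
    using If ch unfolding f_def
    by (intro set_integral_mono set_integrable_abs set_integrable_mult_right I
              besselK0_integrand_taylor_bound c h)
  also have "\<dots> = h\<^sup>2 / 2 * besselK0_moment (Suc (Suc n)) (c / 2)"
    by (simp add: besselK0_moment_def)
  finally show ?thesis .
qed

lemma has_real_derivative_besselK0_moment:
  assumes c: "0 < c"
  shows "(besselK0_moment n has_real_derivative - besselK0_moment (Suc n) c) (at c)"
proof -
  define K where "K = besselK0_moment (Suc (Suc n)) (c / 2)"
  have "eventually (\<lambda>h. norm ((besselK0_moment n (c + h) - besselK0_moment n c) / h
                               - (- besselK0_moment (Suc n) c)) \<le> \<bar>h\<bar> * (K / 2)) (at 0)"
    unfolding eventually_at
  proof (intro exI[of _ "c / 2"] conjI ballI impI)
    show "0 < c / 2" using c by simp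
    fix h :: real assume "h \<noteq> 0 \<and> dist h 0 < c / 2"
    hence h: "h \<noteq> 0" "\<bar>h\<bar> \<le> c / 2" by (auto simp: dist_real_def)
    have "(besselK0_moment n (c + h) - besselK0_moment n c) / h - (- besselK0_moment (Suc n) c)
          = (besselK0_moment n (c + h) - besselK0_moment n c + h * besselK0_moment (Suc n) c) / h"
      using h by (simp add: field_simps)
    thus "norm ((besselK0_moment n (c + h) - besselK0_moment n c) / h
                 - (- besselK0_moment (Suc n) c)) \<le> \<bar>h\<bar> * (K / 2)"
      using besselK0_moment_taylor_bound[OF c h(2), of n] h(1)
      by (simp add: K_def abs_divide divide_le_eq power2_eq_square field_simps)
  qed
  moreover have "((\<lambda>h. \<bar>h\<bar> * (K / 2)) \<longlongrightarrow> 0) (at (0::real))"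
    by (intro tendsto_mult_left_zero tendsto_rabs_zero tendsto_ident_at)
  ultimately have "((\<lambda>h. (besselK0_moment n (c + h) - besselK0_moment n c) / h
                          - (- besselK0_moment (Suc n) c)) \<longlongrightarrow> 0) (at 0)"
    by (rule Lim_null_comparison)
  thus ?thesis unfolding DERIV_def by (simp only: LIM_zero_iff)
qed

text \<open>The derivative of Bessel's equation \<open>c K\<^sub>0'' + K\<^sub>0' - c K\<^sub>0 = 0\<close>. The integrand is the
  derivative of \<open>sinh u cosh u exp (- c cosh u)\<close>, which vanishes at both ends.\<close>

lemma besselK0_moment_recurrence:
  assumes c: "0 < c"
  shows "2 * besselK0_moment 2 c - c * besselK0_moment 3 c = besselK0_moment 0 c - c * besselK0_moment 1 c"
proof -
  define f where "f u = 2 * besselK0_integrand 2 c u - besselK0_integrand 0 c u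
                        - c * besselK0_integrand 3 c u + c * besselK0_integrand 1 c u" for u
  define F where "F u = sinh u * cosh u * exp (- c * cosh u)" for u
  note I = besselK0_integrand_set_integrable[OF c]
  have If: "set_integrable lborel {0<..} f"
    unfolding f_def by (intro set_integral_add set_integral_diff set_integrable_mult_right I)
  have "(LBINT u=ereal 0..\<infinity>. f u) = 0 - 0"
  proof (rule interval_integral_FTC_integrable[where F = F])
    fix x :: real
    have sinh_sq: "sinh x * (sinh x * e) = (cosh x * cosh x - 1) * e" for e
      using sinh_square_eq[of x] by (simp add: power2_eq_square)
    have "(F has_real_derivative f x) (at x)"
      unfolding F_def f_def besselK0_integrand_def
      by (rule derivative_eq_intros refl | simp)+
         (simp add: algebra_simps power2_eq_square power3_eq_cube sinh_sq)
    thus "(F has_vector_derivative f x) (at x)"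
      by (simp add: has_real_derivative_iff_has_vector_derivative)
    show "isCont f x" unfolding f_def besselK0_integrand_def by (intro continuous_intros)
  next
    show "set_integrable lborel (einterval (ereal 0) \<infinity>) f" using If by simp
    have "(F \<longlongrightarrow> 0) (at_right 0)" unfolding F_def by real_asymp
    thus "((F \<circ> real_of_ereal) \<longlongrightarrow> 0) (at_right (ereal 0))" by (simp add: ereal_tendsto_simps)
    have "(F \<longlongrightarrow> 0) at_top" unfolding F_def using c by real_asymp
    thus "((F \<circ> real_of_ereal) \<longlongrightarrow> 0) (at_left \<infinity>)" by (simp add: ereal_tendsto_simps)
  qed simp
  hence "(LBINT u:{0<..}. f u) = 0" by (simp add: interval_integral_to_infinity_eq)
  thus ?thesis unfolding f_def besselK0_moment_def
    by (simp add: set_integral_add set_integral_diff set_integrable_mult_right I)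
qed

lemma has_real_derivative_scaled_besselK0_moment:
  assumes "0 < a * y"
  shows "((\<lambda>z. A * (- a) ^ k * besselK0_moment k (a * z)) has_real_derivative
           A * (- a) ^ Suc k * besselK0_moment (Suc k) (a * y)) (at y)"
  using DERIV_cmult[OF DERIV_chain2[OF has_real_derivative_besselK0_moment[OF assms]
                                      DERIV_cmult[OF DERIV_ident, of a]], of "A * (- a) ^ k"]
  by (simp add: algebra_simps)

lemma higher_deriv_scaled_besselK0:
  fixes Q :: "real \<Rightarrow> real"
  assumes S: "open S" and pos: "\<And>y. y \<in> S \<Longrightarrow> 0 < a * y"
    and Q: "\<And>y. y \<in> S \<Longrightarrow> Q y = A * besselK0 (a * y)" and y: "y \<in> S"
  shows "(deriv ^^ k) Q y = A * (- a) ^ k * besselK0_moment k (a * y)"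
    and "(deriv ^^ k) Q differentiable (at y)"
proof -
  have deriv: "((deriv ^^ k) Q has_real_derivative A * (- a) ^ Suc k * besselK0_moment (Suc k) (a * y)) (at y)
               \<and> (deriv ^^ k) Q y = A * (- a) ^ k * besselK0_moment k (a * y)" if "y \<in> S" for k y
    using that
  proof (induction k arbitrary: y)
    case 0
    show ?case using Q[OF 0] has_field_derivative_transform_within_open[OF
        has_real_derivative_scaled_besselK0_moment[OF pos[OF 0], of A 0] S 0] Q
      by (simp add: besselK0_moment_0)
  next
    case (Suc k)
    have "deriv ((deriv ^^ k) Q) y = A * (- a) ^ Suc k * besselK0_moment (Suc k) (a * y)"
      using Suc.IH[OF Suc.prems] by (simp add: DERIV_imp_deriv)
    moreover have "((deriv ^^ Suc k) Q has_real_derivative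
                    A * (- a) ^ Suc (Suc k) * besselK0_moment (Suc (Suc k)) (a * y)) (at y)"
    proof (rule has_field_derivative_transform_within_open[OF
          has_real_derivative_scaled_besselK0_moment[OF pos[OF Suc.prems]] S Suc.prems])
      fix z assume "z \<in> S"
      hence "deriv ((deriv ^^ k) Q) z = A * (- a) ^ Suc k * besselK0_moment (Suc k) (a * z)"
        using Suc.IH by (blast intro: DERIV_imp_deriv)
      thus "A * (- a) ^ Suc k * besselK0_moment (Suc k) (a * z) = (deriv ^^ Suc k) Q z"
        by simp
    qed
    ultimately show ?case by simp
  qed
  show "(deriv ^^ k) Q y = A * (- a) ^ k * besselK0_moment k (a * y)"
    using deriv[OF y] by blast
  show "(deriv ^^ k) Q differentiable (at y)"
    using deriv[OF y] real_differentiable_def by blast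
qed

section \<open>A Gaussian scale mixture\<close>

lemma nn_integral_even_real:
  fixes f :: "real \<Rightarrow> real"
  assumes [measurable]: "f \<in> borel_measurable borel" and even: "\<And>x. f (- x) = f x"
  shows "(\<integral>\<^sup>+x. ennreal (f x) \<partial>lborel) = 2 * (\<integral>\<^sup>+x. ennreal (f x) * indicator {0<..} x \<partial>lborel)"
proof -
  have "(\<integral>\<^sup>+x. ennreal (f x) \<partial>lborel) =
      (\<integral>\<^sup>+x. ennreal (f x) * indicator {0<..} x + ennreal (f x) * indicator {..<0} x \<partial>lborel)"
    by (intro nn_integral_cong_AE eventually_mono[OF AE_lborel_singleton[of 0]])
       (auto simp: indicator_def)
  also have "\<dots> = (\<integral>\<^sup>+x. ennreal (f x) * indicator {0<..} x \<partial>lborel)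
                  + (\<integral>\<^sup>+x. ennreal (f x) * indicator {..<0} x \<partial>lborel)"
    by (rule nn_integral_add) auto
  also have "(\<integral>\<^sup>+x. ennreal (f x) * indicator {..<0} x \<partial>lborel) =
      (\<integral>\<^sup>+x. ennreal (f (0 + -1 * x)) * indicator {..<0} (0 + -1 * x) \<partial>lborel)"
    using nn_integral_real_affine[of "\<lambda>x. ennreal (f x) * indicator {..<0} x" "-1" 0] by simp
  also have "\<dots> = (\<integral>\<^sup>+x. ennreal (f x) * indicator {0<..} x \<partial>lborel)"
    by (intro nn_integral_cong) (auto simp: even indicator_def)
  finally show ?thesis by (simp add: mult_2)
qed

lemma integral_even_real:
  fixes f :: "real \<Rightarrow> real"
  assumes [measurable]: "f \<in> borel_measurable borel" and even: "\<And>x. f (- x) = f x"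
    and nonneg: "\<And>x. 0 \<le> f x" and int: "set_integrable lborel {0<..} f"
  shows "integrable lborel f" and "integral\<^sup>L lborel f = 2 * (LBINT x:{0<..}. f x)"
proof -
  have "(\<integral>\<^sup>+x. ennreal (f x) * indicator {0<..} x \<partial>lborel) = ennreal (LBINT x:{0<..}. f x)"
    using int nonneg unfolding set_integrable_def set_lebesgue_integral_def
    by (subst nn_integral_eq_integral[symmetric]) (auto intro!: nn_integral_cong simp: indicator_def)
  moreover have half_nonneg: "0 \<le> (LBINT x:{0<..}. f x)"
    unfolding set_lebesgue_integral_def using nonneg
    by (intro integral_nonneg_AE AE_I2) (simp add: indicator_def)
  ultimately have nn: "(\<integral>\<^sup>+x. ennreal (f x) \<partial>lborel) = ennreal (2 * (LBINT x:{0<..}. f x))"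
    using nn_integral_even_real[OF assms(1) even] by (simp add: ennreal_mult)
  show "integrable lborel f"
    by (rule integrableI_nonneg) (use nonneg nn in auto)
  show "integral\<^sup>L lborel f = 2 * (LBINT x:{0<..}. f x)"
    using integral_eq_nn_integral[of f lborel] nonneg nn half_nonneg by simp
qed

lemma normal_density_product_substitution:
  fixes x \<sigma> w :: real
  assumes x: "x \<noteq> 0" and \<sigma>: "0 < \<sigma>"
  defines "k \<equiv> sqrt (\<bar>x\<bar> * \<sigma>)"
  shows "normal_density 0 \<sigma> (k * exp (w / 2)) * normal_density 0 \<bar>k * exp (w / 2)\<bar> x * (k / 2 * exp (w / 2))
         = 1 / (4 * pi * \<sigma>) * besselK0_integrand 0 (\<bar>x\<bar> / \<sigma>) w"
proof -
  define z where "z = k * exp (w / 2)"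
  have z: "0 < z" unfolding z_def k_def using x \<sigma> by simp
  have z2: "z * z = \<bar>x\<bar> * \<sigma> * exp w"
    unfolding z_def k_def using x \<sigma> by (simp add: algebra_simps flip: exp_add)
  have sq1: "sqrt (2 * pi * \<sigma>\<^sup>2) = sqrt (2 * pi) * \<sigma>" using \<sigma> by (simp add: real_sqrt_mult)
  have sq2: "sqrt (2 * pi * z\<^sup>2) = sqrt (2 * pi) * z" using z by (simp add: real_sqrt_mult)
  have prefactor: "1 / (sqrt (2 * pi) * \<sigma>) * (1 / (sqrt (2 * pi) * z)) * (z / 2) = 1 / (4 * pi * \<sigma>)"
    using z \<sigma> by (simp add: field_simps)
  have xx: "x\<^sup>2 = \<bar>x\<bar> * \<bar>x\<bar>" by (simp add: power2_eq_square abs_mult_self_eq)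
  have exp_neg: "exp (- w) = 1 / exp w" by (simp add: exp_minus field_simps)
  have exponent: "- z\<^sup>2 / (2 * \<sigma>\<^sup>2) + - x\<^sup>2 / (2 * z\<^sup>2) = - (\<bar>x\<bar> / \<sigma>) * cosh w"
    unfolding power2_eq_square z2 xx cosh_def exp_neg using \<sigma> x by (simp add: field_simps)
  have "normal_density 0 \<sigma> z * normal_density 0 \<bar>z\<bar> x * (z / 2)
      = (1 / (sqrt (2 * pi) * \<sigma>) * (1 / (sqrt (2 * pi) * z)) * (z / 2))
        * exp (- z\<^sup>2 / (2 * \<sigma>\<^sup>2) + - x\<^sup>2 / (2 * z\<^sup>2))"
    unfolding normal_density_def sq1 using z by (simp add: sq2 exp_add[symmetric] exp_diff)
  also have "\<dots> = 1 / (4 * pi * \<sigma>) * besselK0_integrand 0 (\<bar>x\<bar> / \<sigma>) w"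
    unfolding prefactor exponent besselK0_integrand_def by simp
  finally show ?thesis unfolding z_def by (simp add: mult.assoc)
qed

lemma set_integral_normal_density_scale_mixture:
  fixes x \<sigma> :: real
  assumes x: "x \<noteq> 0" and \<sigma>: "0 < \<sigma>"
  defines "F \<equiv> \<lambda>z. normal_density 0 \<sigma> z * normal_density 0 \<bar>z\<bar> x"
  shows "set_integrable lborel {0<..} F"
    and "(LBINT z:{0<..}. F z) = besselK0 (\<bar>x\<bar> / \<sigma>) / (2 * pi * \<sigma>)"
proof -
  define c where "c = \<bar>x\<bar> / \<sigma>"
  have c: "0 < c" unfolding c_def using x \<sigma> by simp
  define k where "k = sqrt (\<bar>x\<bar> * \<sigma>)"
  have k: "0 < k" unfolding k_def using x \<sigma> by simp
  define g where "g w = k * exp (w / 2)" for w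
  define g' where "g' w = k / 2 * exp (w / 2)" for w
  have Fg: "F (g w) * g' w = 1 / (4 * pi * \<sigma>) * besselK0_integrand 0 c w" for w
    using normal_density_product_substitution[OF x \<sigma>, of w]
    unfolding F_def g_def g'_def k_def c_def by simp
  note K_even = integral_even_real[OF borel_measurable_besselK0_integrand besselK0_integrand_even
      besselK0_integrand_nonneg besselK0_integrand_set_integrable[OF c]]
  have Fg_integrable: "set_integrable lborel (einterval (-\<infinity>) \<infinity>) (\<lambda>w. F (g w) * g' w)"
    unfolding Fg set_integrable_def using K_even(1) by simp
  have g_deriv: "DERIV g w :> g' w" for w
    unfolding g_def g'_def by (auto intro!: derivative_eq_intros)
  have F_cont: "isCont F (g w)" for w
    using k \<sigma> unfolding F_def normal_density_def g_def by (intro continuous_intros) auto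
  have F_nonneg: "0 \<le> F z" for z unfolding F_def by simp
  have g'_cont: "isCont g' w" and g'_nonneg: "0 \<le> g' w" for w
    unfolding g'_def using k by (auto intro!: continuous_intros)
  have g_bot: "((ereal \<circ> g \<circ> real_of_ereal) \<longlongrightarrow> ereal 0) (at_right (- \<infinity>))"
  proof -
    have "(g \<longlongrightarrow> 0) at_bot" unfolding g_def by real_asymp
    thus ?thesis by (simp add: ereal_tendsto_simps)
  qed
  have g_top: "((ereal \<circ> g \<circ> real_of_ereal) \<longlongrightarrow> \<infinity>) (at_left \<infinity>)"
  proof -
    have "filterlim g at_top at_top" unfolding g_def using k by real_asymp
    thus ?thesis by (simp add: ereal_tendsto_simps)
  qed
  note subst = interval_integral_substitution_nonneg[of "-\<infinity>" "\<infinity>" g g' F,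
      OF _ g_deriv F_cont g'_cont F_nonneg g'_nonneg g_bot g_top Fg_integrable]
  show "set_integrable lborel {0<..} F" using subst(1) by simp
  have "(LBINT z:{0<..}. F z) = (LBINT w. 1 / (4 * pi * \<sigma>) * besselK0_integrand 0 c w)"
    using subst(2) unfolding Fg
    by (simp add: interval_integral_to_infinity_eq interval_lebesgue_integral_def set_lebesgue_integral_def)
  also have "\<dots> = besselK0 c / (2 * pi * \<sigma>)"
    using K_even(2) by (simp add: besselK0_moment_def flip: besselK0_moment_0)
  finally show "(LBINT z:{0<..}. F z) = besselK0 (\<bar>x\<bar> / \<sigma>) / (2 * pi * \<sigma>)"
    unfolding c_def .
qed

lemma nn_integral_normal_density_scale_mixture:
  fixes x \<sigma> :: real
  assumes x: "x \<noteq> 0" and \<sigma>: "0 < \<sigma>"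
  shows "(\<integral>\<^sup>+z. ennreal (normal_density 0 \<sigma> z) * ennreal (normal_density 0 \<bar>z\<bar> x) \<partial>lborel)
         = ennreal (besselK0 (\<bar>x\<bar> / \<sigma>) / (pi * \<sigma>))"
proof -
  define F where "F z = normal_density 0 \<sigma> z * normal_density 0 \<bar>z\<bar> x" for z
  have F_measurable: "F \<in> borel_measurable borel" unfolding F_def normal_density_def by measurable
  have F_even: "F (- z) = F z" and F_nonneg: "0 \<le> F z" for z
    unfolding F_def normal_density_def by simp_all
  note half = set_integral_normal_density_scale_mixture[OF x \<sigma>, folded F_def]
  note F_integral = integral_even_real[OF F_measurable F_even F_nonneg half(1)]
  have "(\<integral>\<^sup>+z. ennreal (normal_density 0 \<sigma> z) * ennreal (normal_density 0 \<bar>z\<bar> x) \<partial>lborel)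
        = (\<integral>\<^sup>+z. ennreal (F z) \<partial>lborel)"
    unfolding F_def by (simp add: ennreal_mult)
  also have "\<dots> = ennreal (integral\<^sup>L lborel F)"
    by (rule nn_integral_eq_integral[OF F_integral(1)]) (simp add: F_nonneg)
  also have "\<dots> = ennreal (besselK0 (\<bar>x\<bar> / \<sigma>) / (pi * \<sigma>))"
    unfolding F_integral(2) half(2) by simp
  finally show ?thesis .
qed

section \<open>The density \<open>q\<close> and its PDE\<close>

lemma has_integral_normal_density_subordinated:
  fixes H1 H2 t x :: real and M :: "'a measure" and Z :: "'a \<Rightarrow> real" and g :: "real \<Rightarrow> real"
  assumes H1: "0 < H1" and t: "0 < t" and x: "x \<noteq> 0"
    and Z: "distributed M lborel Z (\<lambda>z. ennreal (normal_density 0 (t powr H2) z))"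
    and g: "distributed M lborel (\<lambda>\<omega>. \<bar>Z \<omega>\<bar> powr (1 / H1)) (\<lambda>s. ennreal (g s))"
    and g_nonneg: "\<And>s. 0 \<le> g s"
  shows "((\<lambda>s. normal_density 0 (s powr H1) x * g s) has_integral qdens H2 x t) {0<..}"
proof -
  define \<sigma> where "\<sigma> = t powr H2"
  have \<sigma>: "0 < \<sigma>" unfolding \<sigma>_def using t by simp
  have [measurable]: "g \<in> borel_measurable borel"
    using distributed_real_measurable[OF _ g] g_nonneg by simp
  have [measurable]: "Z \<in> borel_measurable M" using distributed_measurable[OF Z] by simp
  define f where "f s = (if s \<in> {0<..} then normal_density 0 (s powr H1) x * g s else 0)" for s
  have f_measurable: "f \<in> borel_measurable borel" unfolding f_def normal_density_def by measurable
  have f_nonneg: "0 \<le> f s" for s unfolding f_def using g_nonneg by simp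
  have subordinate: "indicator {0<..} (\<bar>z\<bar> powr (1 / H1)) * normal_density 0 ((\<bar>z\<bar> powr (1 / H1)) powr H1) x
                      = normal_density 0 \<bar>z\<bar> x" for z
    using H1 by (cases "z = 0") (auto simp: normal_density_def powr_powr)
  have "(\<integral>\<^sup>+s. ennreal (f s) \<partial>lborel) =
      (\<integral>\<^sup>+s. ennreal (g s) * ennreal (indicator {0<..} s * normal_density 0 (s powr H1) x) \<partial>lborel)"
    unfolding f_def using g_nonneg by (intro nn_integral_cong) (auto simp: ennreal_mult' mult.commute)
  also have "\<dots> = (\<integral>\<^sup>+\<omega>. ennreal (indicator {0<..} (\<bar>Z \<omega>\<bar> powr (1 / H1)) *
       normal_density 0 ((\<bar>Z \<omega>\<bar> powr (1 / H1)) powr H1) x) \<partial>M)"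
    by (rule distributed_nn_integral[OF g]) (unfold normal_density_def, measurable)
  also have "\<dots> = (\<integral>\<^sup>+\<omega>. ennreal (normal_density 0 \<bar>Z \<omega>\<bar> x) \<partial>M)"
    by (simp only: subordinate)
  also have "\<dots> = (\<integral>\<^sup>+z. ennreal (normal_density 0 \<sigma> z) * ennreal (normal_density 0 \<bar>z\<bar> x) \<partial>lborel)"
    unfolding \<sigma>_def
    by (rule distributed_nn_integral[OF Z, symmetric]) (unfold normal_density_def, measurable)
  also have "\<dots> = ennreal (qdens H2 x t)"
    using nn_integral_normal_density_scale_mixture[OF x \<sigma>] unfolding qdens_def \<sigma>_def by simp
  finally have "(\<integral>\<^sup>+s. ennreal (f s) \<partial>lborel) = ennreal (qdens H2 x t)" .
  moreover have "0 \<le> qdens H2 x t"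
    using t besselK0_moment_nonneg[of 0] by (simp add: qdens_def besselK0_moment_0)
  ultimately have "(f has_integral qdens H2 x t) UNIV"
    by (rule nn_integral_has_integral[OF f_measurable f_nonneg])
  thus ?thesis unfolding f_def has_integral_restrict_UNIV .
qed

lemma qdens_space_derivatives:
  fixes H2 t x :: real
  assumes t: "0 < t" and x: "x \<noteq> 0"
  shows "(deriv ^^ k) (\<lambda>y. qdens H2 y t) x
           = (- sgn x / t powr H2) ^ k / (pi * t powr H2) * besselK0_moment k (\<bar>x\<bar> / t powr H2)"
    and "(deriv ^^ k) (\<lambda>y. qdens H2 y t) differentiable (at x)"
proof -
  define s where "s = t powr H2"
  have s: "0 < s" unfolding s_def using t by simp
  define S where "S = {y :: real. 0 < sgn x * y}"
  have S_open: "open S" unfolding S_def by (intro open_Collect_less continuous_intros)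
  have pos: "0 < sgn x / s * y" if "y \<in> S" for y
    using that s unfolding S_def by simp
  have Q_eq: "qdens H2 y t = 1 / (pi * s) * besselK0 (sgn x / s * y)" if "y \<in> S" for y
    using that unfolding S_def qdens_def s_def by (auto simp: sgn_if zero_less_mult_iff split: if_splits)
  have "x \<in> S" unfolding S_def using x by (simp add: sgn_if)
  note Q = higher_deriv_scaled_besselK0[OF S_open pos Q_eq this, where k = k]
  have "sgn x * x = \<bar>x\<bar>" by (simp add: sgn_if)
  thus "(deriv ^^ k) (\<lambda>y. qdens H2 y t) x
          = (- sgn x / t powr H2) ^ k / (pi * t powr H2) * besselK0_moment k (\<bar>x\<bar> / t powr H2)"
    using Q(1) unfolding s_def by simp
  show "(deriv ^^ k) (\<lambda>y. qdens H2 y t) differentiable (at x)"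
    using Q(2) .
qed

lemma has_real_derivative_qdens_time:
  fixes H2 t x :: real
  assumes t: "0 < t" and x: "x \<noteq> 0"
  defines "s \<equiv> t powr H2" and "c \<equiv> \<bar>x\<bar> / t powr H2"
  shows "((\<lambda>\<tau>. qdens H2 x \<tau>) has_real_derivative
           H2 * t powr (H2 - 1) / (pi * s\<^sup>2) * (c * besselK0_moment 1 c - besselK0 c)) (at t)"
proof -
  define p' where "p' = H2 * t powr (H2 - 1)"
  have s: "0 < s" and c: "0 < c" unfolding c_def s_def using t x by auto
  have dp: "((\<lambda>\<tau>. \<tau> powr H2) has_real_derivative p') (at t)"
    unfolding p'_def by (rule has_real_derivative_powr[OF t])
  have dc: "((\<lambda>\<tau>. \<bar>x\<bar> / \<tau> powr H2) has_real_derivative - \<bar>x\<bar> * p' / s\<^sup>2) (at t)"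
    using DERIV_divide[OF DERIV_const dp] s unfolding s_def by (simp add: power2_eq_square)
  have dK: "(besselK0 has_real_derivative - besselK0_moment 1 c) (at c)"
    using has_real_derivative_besselK0_moment[OF c, of 0] by (simp add: besselK0_moment_0)
  have dA: "((\<lambda>\<tau>. 1 / (pi * \<tau> powr H2)) has_real_derivative - p' / (pi * s\<^sup>2)) (at t)"
    using DERIV_divide[OF DERIV_const[of 1] DERIV_cmult[OF dp, of pi]] s unfolding s_def
    by (simp add: power2_eq_square mult_ac)
  have "((\<lambda>\<tau>. qdens H2 x \<tau>) has_real_derivative
          - p' / (pi * s\<^sup>2) * besselK0 c + - besselK0_moment 1 c * (- \<bar>x\<bar> * p' / s\<^sup>2) * (1 / (pi * s))) (at t)"
    using DERIV_mult[OF dA DERIV_chain2[OF dK[unfolded c_def] dc]]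
    unfolding qdens_def c_def s_def .
  thus ?thesis
    by (rule DERIV_cong) (use s in \<open>simp add: p'_def c_def s_def field_simps power2_eq_square\<close>)
qed

lemma qdens_pde:
  fixes H2 t x :: real
  assumes t: "0 < t" and x: "x \<noteq> 0"
  shows "deriv (\<lambda>\<tau>. qdens H2 x \<tau>) t =
           - H2 * t powr (2 * H2 - 1) *
             (2 * (deriv ^^ 2) (\<lambda>y. qdens H2 y t) x + x * (deriv ^^ 3) (\<lambda>y. qdens H2 y t) x)"
proof -
  define s where "s = t powr H2"
  define c where "c = \<bar>x\<bar> / s"
  have s: "0 < s" and c: "0 < c" unfolding c_def s_def using t x by auto
  define e where "e = sgn x"
  have e_sq: "e * e = 1" and x_e: "x * e = \<bar>x\<bar>" unfolding e_def using x by (auto simp: sgn_if)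
  have space_deriv: "(deriv ^^ k) (\<lambda>y. qdens H2 y t) x = (- e / s) ^ k / (pi * s) * besselK0_moment k c" for k
    using qdens_space_derivatives(1)[OF t x] unfolding e_def s_def c_def .
  have sq: "(- e / s) ^ 2 = 1 / s\<^sup>2" using e_sq by (simp add: power_divide power2_eq_square)
  have d2: "(deriv ^^ 2) (\<lambda>y. qdens H2 y t) x = besselK0_moment 2 c / (pi * s ^ 3)"
    unfolding space_deriv sq by (simp add: power2_eq_square power3_eq_cube mult_ac)
  have d3: "x * (deriv ^^ 3) (\<lambda>y. qdens H2 y t) x = - c * besselK0_moment 3 c / (pi * s ^ 3)"
  proof -
    have "x * (- e / s) ^ 3 = - (x * e) * (e * e) / s ^ 3"
      by (simp add: power_divide power3_eq_cube algebra_simps)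
    also have "\<dots> = - c / s\<^sup>2" unfolding x_e e_sq c_def using s by (simp add: power2_eq_square power3_eq_cube)
    finally have cube: "x * (- e / s) ^ 3 = - c / s\<^sup>2" .
    have "x * (deriv ^^ 3) (\<lambda>y. qdens H2 y t) x = x * (- e / s) ^ 3 / (pi * s) * besselK0_moment 3 c"
      by (simp only: space_deriv times_divide_eq_left times_divide_eq_right mult.assoc)
    thus ?thesis unfolding cube by (simp add: power2_eq_square power3_eq_cube)
  qed
  have "2 * (deriv ^^ 2) (\<lambda>y. qdens H2 y t) x + x * (deriv ^^ 3) (\<lambda>y. qdens H2 y t) x
          = (2 * besselK0_moment 2 c - c * besselK0_moment 3 c) / (pi * s ^ 3)"
    unfolding d2 d3 by (simp add: diff_divide_distrib)
  also have "\<dots> = (besselK0 c - c * besselK0_moment 1 c) / (pi * s ^ 3)"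
    unfolding besselK0_moment_recurrence[OF c] besselK0_moment_0 ..
  finally have space_part: "2 * (deriv ^^ 2) (\<lambda>y. qdens H2 y t) x + x * (deriv ^^ 3) (\<lambda>y. qdens H2 y t) x
                              = (besselK0 c - c * besselK0_moment 1 c) / (pi * s ^ 3)" .
  have time_factor: "t powr (2 * H2 - 1) = t powr (H2 - 1) * s"
    unfolding s_def using t by (simp add: powr_add[symmetric])
  have time_part: "deriv (\<lambda>\<tau>. qdens H2 x \<tau>) t
                   = H2 * t powr (H2 - 1) / (pi * s\<^sup>2) * (c * besselK0_moment 1 c - besselK0 c)"
    using has_real_derivative_qdens_time[OF t x] unfolding c_def s_def by (rule DERIV_imp_deriv)
  show ?thesis
    unfolding space_part time_part time_factor using s by (simp add: power2_eq_square power3_eq_cube field_simps)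
qed

theorem mainTheorem16:
  fixes H1 H2 t x :: real and M :: "'a measure" and Z :: "'a \<Rightarrow> real" and g :: "real \<Rightarrow> real"
  assumes H1: "0 < H1" "H1 < 1"
    and H2: "0 < H2" "H2 < 1"
    and t: "0 < t"
    and x: "x \<noteq> 0"
    and M: "prob_space M"
    and Z: "distributed M lborel Z (\<lambda>z. ennreal (normal_density 0 (t powr H2) z))"
    and g: "distributed M lborel (\<lambda>\<omega>. \<bar>Z \<omega>\<bar> powr (1 / H1)) (\<lambda>s. ennreal (g s))"
    and g_nonneg: "\<And>s. 0 \<le> g s"
  shows "((\<lambda>s. normal_density 0 (s powr H1) x * g s) has_integral qdens H2 x t) {0<..}
     \<and> (\<lambda>\<tau>. qdens H2 x \<tau>) differentiable (at t)
     \<and> (\<forall>k<3. ((deriv ^^ k) (\<lambda>y. qdens H2 y t)) differentiable (at x))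
     \<and> deriv (\<lambda>\<tau>. qdens H2 x \<tau>) t =
           - H2 * t powr (2 * H2 - 1) *
             (2 * (deriv ^^ 2) (\<lambda>y. qdens H2 y t) x + x * (deriv ^^ 3) (\<lambda>y. qdens H2 y t) x)"
proof (intro conjI allI impI)
  show "((\<lambda>s. normal_density 0 (s powr H1) x * g s) has_integral qdens H2 x t) {0<..}"
    by (rule has_integral_normal_density_subordinated[OF H1(1) t x Z g g_nonneg])
  show "(\<lambda>\<tau>. qdens H2 x \<tau>) differentiable (at t)"
    using has_real_derivative_qdens_time[OF t x] real_differentiable_def by blast
  show "(deriv ^^ k) (\<lambda>y. qdens H2 y t) differentiable (at x)" for k
    by (rule qdens_space_derivatives(2)[OF t x])
  show "deriv (\<lambda>\<tau>. qdens H2 x \<tau>) t =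
          - H2 * t powr (2 * H2 - 1) *
            (2 * (deriv ^^ 2) (\<lambda>y. qdens H2 y t) x + x * (deriv ^^ 3) (\<lambda>y. qdens H2 y t) x)"
    by (rule qdens_pde[OF t x])
qed

end
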